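(* Let $(p_n)_{n\ge1}$ be a sequence in $[0,1]$ with $p_n \ll \frac{1}{n^3}$, i.e. $\lim_{n\to\infty} n^3 p_n = 0$. Let $G_n$ be the Erdős–Rényi random graph on the vertex set $\mathcal C^0_n$ with edge probability $p_n$, and let $R_n$ be the reaction network associated to $G_n$. Then \[ \lim_{n\to\infty}\mathbb P(\delta_{R_n}=0)=1 . \]
   Context: A reaction network on species $S_1,\dots,S_n$ consists of a finite set $\mathcal R$ of reactions $y\to y'$ where $y\neq y'$ are complexes, i.e. vectors in $\mathbb Z^n_{\ge0}$; $\mathcal C$ is the set of complexes appearing in some reaction. Its graph has vertex set $\mathcal C$ and a directed edge $y\to y'$ for each reaction; $\ell$ denotes the number of connected components of this graph (ignoring edge directions), $s=\dim\operatorname{span}\{y'-y: y\to y'\in\mathcal R\}$, and the deficiency is $\delta=|\mathcal C|-\ell-s$ (the empty network, with no reactions, has $\delta=0$). Let $e_i$ be the $i$-th standard basis vector of $\mathbb Z^n$ and $\mathcal C^0_n=\{0\}\cup\{e_i:1\le i\le n\}\cup\{e_i+e_j:1\le i\le j\le n\}$, so $N_n=|\mathcal C^0_n|=\frac{n^2+3n+2}{2}$. $G_n$ is the Erdős–Rényi random graph on vertex set $\mathcal C^0_n$ in which each of the $\binom{N_n}{2}$ possible undirected edges is present independently with probability $p_n$. The associated reaction network $R_n$ has species $S_1,\dots,S_n$, complex set equal to the set of vertices of $G_n$ of positive degree, and for each edge $\{y,y'\}$ of $G_n$ the two reactions $y\to y'$ and $y'\to y$. $\delta_{R_n}$ denotes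 the deficiency of $R_n$. *)

theory Defs
  imports Complex_Main
begin

text \<open>Complexes are vectors in Z_{\<ge>0}^n, represented as functions nat \<Rightarrow> nat
  (species indexed 0..n-1). A reaction network is a set of reactions (y, y').\<close>

type_synonym complex = "nat \<Rightarrow> nat"
type_synonym reaction_network = "(complex \<times> complex) set"

definition unit_vec :: "nat \<Rightarrow> complex" where
  "unit_vec i = (\<lambda>k. if k = i then 1 else 0)"

definition C0 :: "nat \<Rightarrow> complex set" where
  "C0 n = {\<lambda>_. 0} \<union> {unit_vec i | i. i < n}
          \<union> {(\<lambda>k. unit_vec i k + unit_vec j k) | i j. i \<le> j \<and> j < n}"

definition complexes :: "reaction_network \<Rightarrow> complex set" where
  "complexes R = fst ` R \<union> snd ` R"

definition num_linkage_classes :: "reaction_network \<Rightarrow> nat" where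
  "num_linkage_classes R =
     card (complexes R // (((R \<union> R\<inverse>)\<^sup>*) \<inter> (complexes R \<times> complexes R)))"

definition reaction_vec :: "complex \<Rightarrow> complex \<Rightarrow> (nat \<Rightarrow> real)" where
  "reaction_vec y y' = (\<lambda>i. real (y' i) - real (y i))"

definition lin_indep :: "(nat \<Rightarrow> real) set \<Rightarrow> bool" where
  "lin_indep B \<longleftrightarrow> finite B \<and>
     (\<forall>c. (\<forall>i. (\<Sum>v\<in>B. c v * v i) = 0) \<longrightarrow> (\<forall>v\<in>B. c v = 0))"

definition span_dim :: "(nat \<Rightarrow> real) set \<Rightarrow> nat" where
  "span_dim D = Max (card ` {B. B \<subseteq> D \<and> lin_indep B})"

definition stoich_dim :: "reaction_network \<Rightarrow> nat" where
  "stoich_dim R = span_dim {reaction_vec y y' | y y'. (y, y') \<in> R}"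

definition deficiency :: "reaction_network \<Rightarrow> int" where
  "deficiency R = int (card (complexes R)) - int (num_linkage_classes R) - int (stoich_dim R)"

definition possible_edges :: "nat \<Rightarrow> complex set set" where
  "possible_edges n = {{y, y'} | y y'. y \<in> C0 n \<and> y' \<in> C0 n \<and> y \<noteq> y'}"

text \<open>Reaction network associated to a graph with edge set E: both directions of each edge.
  Its complexes are exactly the vertices of positive degree.\<close>
definition network_of :: "complex set set \<Rightarrow> reaction_network" where
  "network_of E = {(y, y') | y y'. {y, y'} \<in> E \<and> y \<noteq> y'}"

definition ER_weight :: "nat \<Rightarrow> real \<Rightarrow> complex set set \<Rightarrow> real" where
  "ER_weight n p E = p ^ card E * (1 - p) ^ (card (possible_edges n) - card E)"

definition ER_prob :: "nat \<Rightarrow> real \<Rightarrow> (complex set set \<Rightarrow> bool) \<Rightarrow> real" where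
  "ER_prob n p Q = (\<Sum>E\<in>{E. E \<subseteq> possible_edges n \<and> Q E}. ER_weight n p E)"

end

theory Submission
  imports Defs "HOL-Library.FuncSet"
begin

text \<open>Call an edge set bad if two of its edges share a complex, or if its support
  hypergraph (vertices are species, an edge {y, y'} covers the species on which y and y'
  differ) contains a cycle or a path whose two end edges are supported only at their
  junction species. If E is not bad, every edge is its own linkage class and the
  reaction vectors of the edges are linearly independent, so the deficiency is
  2|E| - |E| - |E| = 0. By the union bound, two edges share a complex with probability
  at most (n+1)^6 p^2, and there are at most (3(n+1)^3)^k cycles or pendant paths with
  k edges, each present with probability p^k. With x = 3(n+1)^3 p, which tends to 0 when
  n^3 p does, all bad events together have probability at most 5 x^2.\<close>

section \<open>Probabilities in the random graph\<close>

lemma sum_Pow_bernoulli_weights: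
  fixes p :: real
  assumes "finite A"
  shows "(\<Sum>G\<in>Pow A. p ^ card G * (1 - p) ^ (card A - card G)) = 1"
  using assms
proof (induction A rule: finite_induct)
  case empty
  then show ?case by simp
next
  case (insert a A)
  let ?w = "\<lambda>G. p ^ card G * (1 - p) ^ (card (insert a A) - card G)"
  have finite_G: "finite G" if "G \<in> Pow A" for G
    using that insert.hyps(1) finite_subset by blast
  have "(\<Sum>G\<in>Pow (insert a A). ?w G) = (\<Sum>G\<in>Pow A. ?w G) + (\<Sum>G\<in>insert a ` Pow A. ?w G)"
    unfolding Pow_insert using insert.hyps by (intro sum.union_disjoint) auto
  also have "(\<Sum>G\<in>Pow A. ?w G) = (1 - p) * (\<Sum>G\<in>Pow A. p ^ card G * (1 - p) ^ (card A - card G))"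
    unfolding sum_distrib_left
    using insert.hyps by (intro sum.cong) (auto simp: Suc_diff_le card_mono)
  also have "(\<Sum>G\<in>insert a ` Pow A. ?w G) = (\<Sum>G\<in>Pow A. ?w (insert a G))"
    using insert.hyps by (intro sum.reindex_cong[of "insert a"]) (auto simp: inj_on_def)
  also have "\<dots> = p * (\<Sum>G\<in>Pow A. p ^ card G * (1 - p) ^ (card A - card G))"
    unfolding sum_distrib_left
  proof (intro sum.cong refl)
    fix G assume G: "G \<in> Pow A"
    then have "a \<notin> G" "finite G" using insert.hyps finite_G by auto
    then show "?w (insert a G) = p * (p ^ card G * (1 - p) ^ (card A - card G))"
      using insert.hyps by simp
  qed
  finally show ?case using insert.IH by simp
qed

lemma finite_C0: "finite (C0 n)"
proof -
  have "C0 n = {\<lambda>_. 0} \<union> unit_vec ` {..<n}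
      \<union> (\<lambda>(i, j) k. unit_vec i k + unit_vec j k) ` {(i, j). i \<le> j \<and> j < n}"
    unfolding C0_def by auto
  moreover have "finite {(i, j). i \<le> j \<and> j < (n::nat)}"
    by (rule finite_subset[of _ "{..<n} \<times> {..<n}"]) auto
  ultimately show ?thesis by simp
qed

lemma finite_possible_edges: "finite (possible_edges n)"
proof -
  have "possible_edges n \<subseteq> (\<lambda>(y, y'). {y, y'}) ` (C0 n \<times> C0 n)"
    unfolding possible_edges_def by auto
  then show ?thesis using finite_C0 finite_subset by blast
qed

lemma finite_ER_event: "finite {E. E \<subseteq> possible_edges n \<and> Q E}"
  using finite_possible_edges by simp

lemma ER_weight_nonneg: "0 \<le> p \<Longrightarrow> p \<le> 1 \<Longrightarrow> 0 \<le> ER_weight n p E"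
  unfolding ER_weight_def by simp

lemma ER_prob_contains:
  fixes p :: real
  assumes F: "F \<subseteq> possible_edges n"
  shows "ER_prob n p (\<lambda>E. F \<subseteq> E) = p ^ card F"
proof -
  let ?P = "possible_edges n"
  have finite_F: "finite F" using F finite_possible_edges finite_subset by blast
  have weight: "ER_weight n p (F \<union> G) = p ^ card F * (p ^ card G * (1 - p) ^ (card (?P - F) - card G))"
    if G: "G \<in> Pow (?P - F)" for G
  proof -
    have "finite G" using G finite_possible_edges finite_subset by blast
    then have "card (F \<union> G) = card F + card G"
      using G finite_F by (subst card_Un_disjoint) auto
    moreover have "card (?P - F) = card ?P - card F"
      using F finite_F by (simp add: card_Diff_subset)
    moreover have "card G \<le> card (?P - F)" "card F \<le> card ?P"
      using G F finite_possible_edges by (simp_all add: card_mono)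
    ultimately show ?thesis unfolding ER_weight_def by (simp add: power_add)
  qed
  have "{E. E \<subseteq> ?P \<and> F \<subseteq> E} = (\<union>) F ` Pow (?P - F)" using F by auto
  then have "ER_prob n p (\<lambda>E. F \<subseteq> E) = (\<Sum>G\<in>Pow (?P - F). ER_weight n p (F \<union> G))"
    unfolding ER_prob_def by (intro sum.reindex_cong[of "(\<union>) F"]) (auto simp: inj_on_def)
  also have "\<dots> = p ^ card F * (\<Sum>G\<in>Pow (?P - F). p ^ card G * (1 - p) ^ (card (?P - F) - card G))"
    by (simp add: weight sum_distrib_left)
  also have "\<dots> = p ^ card F"
    using sum_Pow_bernoulli_weights[of "?P - F" p] finite_possible_edges by simp
  finally show ?thesis .
qed

lemma ER_prob_True: "ER_prob n p (\<lambda>_. True) = 1"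
  using ER_prob_contains[of "{}" n p] by simp

lemma ER_prob_not: "ER_prob n p (\<lambda>E. \<not> Q E) = 1 - ER_prob n p Q"
proof -
  have "ER_prob n p (\<lambda>_. True) = ER_prob n p (\<lambda>E. \<not> Q E) + ER_prob n p Q"
    unfolding ER_prob_def
    by (subst sum.union_disjoint[symmetric]) (auto intro: sum.cong simp: finite_possible_edges)
  then show ?thesis using ER_prob_True[of n p] by simp
qed

lemma ER_prob_mono:
  assumes "0 \<le> p" "p \<le> 1" "\<And>E. E \<subseteq> possible_edges n \<Longrightarrow> Q E \<Longrightarrow> Q' E"
  shows "ER_prob n p Q \<le> ER_prob n p Q'"
  unfolding ER_prob_def using assms
  by (intro sum_mono2 finite_ER_event) (auto simp: ER_weight_nonneg)

lemma ER_prob_le_1: "0 \<le> p \<Longrightarrow> p \<le> 1 \<Longrightarrow> ER_prob n p Q \<le> 1"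
  using ER_prob_mono[of p n Q "\<lambda>_. True"] ER_prob_True by simp

lemma ER_prob_disj_le:
  assumes "0 \<le> p" "p \<le> 1"
  shows "ER_prob n p (\<lambda>E. Q E \<or> Q' E) \<le> ER_prob n p Q + ER_prob n p Q'"
proof -
  have "{E. E \<subseteq> possible_edges n \<and> (Q E \<or> Q' E)}
      = {E. E \<subseteq> possible_edges n \<and> Q E} \<union> {E. E \<subseteq> possible_edges n \<and> Q' E}"
    by auto
  then show ?thesis unfolding ER_prob_def
    by (simp add: sum_Un finite_possible_edges sum_nonneg ER_weight_nonneg assms)
qed

lemma ER_prob_union_bound:
  fixes p :: real
  assumes p: "0 \<le> p" "p \<le> 1" and "finite T" and "\<And>t. t \<in> T \<Longrightarrow> g t \<subseteq> possible_edges n"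
  shows "ER_prob n p (\<lambda>E. \<exists>t\<in>T. g t \<subseteq> E) \<le> (\<Sum>t\<in>T. p ^ card (g t))"
  using assms(3,4)
proof (induction T rule: finite_induct)
  case empty
  then show ?case by (simp add: ER_prob_def)
next
  case (insert t T)
  have "ER_prob n p (\<lambda>E. \<exists>t'\<in>insert t T. g t' \<subseteq> E)
      \<le> ER_prob n p (\<lambda>E. g t \<subseteq> E) + ER_prob n p (\<lambda>E. \<exists>t'\<in>T. g t' \<subseteq> E)"
    using ER_prob_disj_le[OF p] by simp
  also have "\<dots> \<le> p ^ card (g t) + (\<Sum>t'\<in>T. p ^ card (g t'))"
    using insert by (simp add: ER_prob_contains)
  finally show ?case using insert.hyps by simp
qed

section \<open>Complexes and edge supports\<close>

lemma C0_cases: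
  assumes "y \<in> C0 n"
  obtains "y = (\<lambda>_. 0)"
    | i where "i < n" "y = unit_vec i"
    | i j where "i \<le> j" "j < n" "y = (\<lambda>k. unit_vec i k + unit_vec j k)"
  using assms unfolding C0_def by blast

lemma C0_le_2: "y \<in> C0 n \<Longrightarrow> y i \<le> 2"
  by (erule C0_cases) (auto simp: unit_vec_def)

lemma C0_eq_0: "y \<in> C0 n \<Longrightarrow> n \<le> i \<Longrightarrow> y i = 0"
  by (erule C0_cases) (auto simp: unit_vec_def)

lemma card_C0_le: "card (C0 n) \<le> (n + 1) ^ 2"
proof -
  let ?pairs = "{(i, j). i \<le> j \<and> j < (n::nat)}"
  have pairs: "?pairs \<subseteq> {..<n} \<times> {..<n}" by auto
  have C0_eq: "C0 n = insert (\<lambda>_. 0) (unit_vec ` {..<n})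
      \<union> (\<lambda>(i, j) k. unit_vec i k + unit_vec j k) ` ?pairs"
    unfolding C0_def by auto
  have "card (C0 n) \<le> card (insert (\<lambda>_. 0) (unit_vec ` {..<n}))
      + card ((\<lambda>(i, j) k. unit_vec i k + unit_vec j k) ` ?pairs)"
    unfolding C0_eq by (rule card_Un_le)
  also have "\<dots> \<le> Suc n + n * n"
  proof (rule add_mono)
    show "card (insert (\<lambda>_. 0) (unit_vec ` {..<n})) \<le> Suc n"
      using card_insert_le_m1[of "Suc n" "unit_vec ` {..<n}"] card_image_le[of "{..<n}" unit_vec]
      by simp
    have "card ?pairs \<le> n * n"
      using card_mono[OF _ pairs] by (simp add: card_cartesian_product)
    then show "card ((\<lambda>(i, j) k. unit_vec i k + unit_vec j k) ` ?pairs) \<le> n * n"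
      using card_image_le[OF finite_subset[OF pairs]] le_trans by blast
  qed
  finally show ?thesis by (simp add: power2_eq_square)
qed

lemma possible_edgesE:
  assumes "e \<in> possible_edges n"
  obtains y y' where "e = {y, y'}" "y \<in> C0 n" "y' \<in> C0 n" "y \<noteq> y'"
  using assms unfolding possible_edges_def by blast

lemma possible_edges_memE:
  assumes "e \<in> possible_edges n" "y \<in> e"
  obtains y' where "e = {y, y'}" "y \<in> C0 n" "y' \<in> C0 n" "y \<noteq> y'"
proof -
  obtain a b where ab: "e = {a, b}" "a \<in> C0 n" "b \<in> C0 n" "a \<noteq> b"
    using assms(1) by (rule possible_edgesE)
  then consider "y = a" | "y = b" using assms(2) by blast
  then show ?thesis
  proof cases
    case 1
    then show ?thesis using that[of b] ab by blast
  next
    case 2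
    then show ?thesis using that[of a] ab by (simp add: insert_commute)
  qed
qed

definition edge_support :: "complex set \<Rightarrow> nat set" where
  "edge_support e = {i. \<exists>y\<in>e. \<exists>y'\<in>e. y i \<noteq> y' i}"

lemma edge_support_doubleton: "edge_support {y, y'} = {i. y i \<noteq> y' i}"
  unfolding edge_support_def by auto

lemma edge_support_subset: "e \<in> possible_edges n \<Longrightarrow> edge_support e \<subseteq> {..<n}"
  by (erule possible_edgesE) (auto simp: edge_support_doubleton C0_eq_0 not_less[symmetric])

lemma edge_support_nonempty: "e \<in> possible_edges n \<Longrightarrow> edge_support e \<noteq> {}"
  by (erule possible_edgesE) (auto simp: edge_support_doubleton fun_eq_iff)

definition complexes_with :: "nat \<Rightarrow> nat \<Rightarrow> complex set" where
  "complexes_with n c = {y \<in> C0 n. y c \<noteq> 0}"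

definition edges_through :: "nat \<Rightarrow> nat \<Rightarrow> nat \<Rightarrow> complex set set" where
  "edges_through n c d = {e \<in> possible_edges n. c \<in> edge_support e \<and> d \<in> edge_support e}"

definition edges_supported_in :: "nat \<Rightarrow> nat \<Rightarrow> complex set set" where
  "edges_supported_in n c = {e \<in> possible_edges n. edge_support e \<subseteq> {c}}"

lemma finite_edges_through: "finite (edges_through n c d)"
  unfolding edges_through_def using finite_possible_edges by simp

lemma finite_edges_supported_in: "finite (edges_supported_in n c)"
  unfolding edges_supported_in_def using finite_possible_edges by simp

lemma card_complexes_with_le: "card (complexes_with n c) \<le> n + 1"
proof -
  have "complexes_with n c \<subseteq> insert (unit_vec c) ((\<lambda>j k. unit_vec c k + unit_vec j k) ` {..<n})"
  proof
    fix y assume "y \<in> complexes_with n c"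
    then have y: "y \<in> C0 n" "y c \<noteq> 0" unfolding complexes_with_def by auto
    from y(1) show "y \<in> insert (unit_vec c) ((\<lambda>j k. unit_vec c k + unit_vec j k) ` {..<n})"
    proof (cases rule: C0_cases)
      case 1
      then show ?thesis using y(2) by simp
    next
      case (2 i)
      then show ?thesis using y(2) by (auto simp: unit_vec_def split: if_splits)
    next
      case (3 i j)
      then have "i = c \<or> j = c" using y(2) by (auto simp: unit_vec_def split: if_splits)
      with 3 show ?thesis by (auto simp: add.commute)
    qed
  qed
  then have "card (complexes_with n c) \<le> card (insert (unit_vec c) ((\<lambda>j k. unit_vec c k + unit_vec j k) ` {..<n}))"
    by (intro card_mono) auto
  also have "\<dots> \<le> Suc (card ((\<lambda>j k. unit_vec c k + unit_vec j k) ` {..<n}))"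
    by (simp add: card_insert_if)
  also have "\<dots> \<le> Suc n" using card_image_le[of "{..<n}"] by simp
  finally show ?thesis by simp
qed

lemma card_complexes_with_Int_le:
  assumes "c \<noteq> d"
  shows "card (complexes_with n c \<inter> complexes_with n d) \<le> 1"
proof -
  have "complexes_with n c \<inter> complexes_with n d \<subseteq> {\<lambda>k. unit_vec c k + unit_vec d k}"
  proof
    fix y assume "y \<in> complexes_with n c \<inter> complexes_with n d"
    then have y: "y \<in> C0 n" "y c \<noteq> 0" "y d \<noteq> 0" unfolding complexes_with_def by auto
    from y(1) show "y \<in> {\<lambda>k. unit_vec c k + unit_vec d k}"
    proof (cases rule: C0_cases)
      case 1
      then show ?thesis using y(2) by simp
    next
      case (2 i)
      then show ?thesis using y(2,3) assms by (auto simp: unit_vec_def split: if_splits)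
    next
      case (3 i j)
      then have "(i = c \<and> j = d) \<or> (i = d \<and> j = c)"
        using y(2,3) assms by (auto simp: unit_vec_def split: if_splits)
      with 3 show ?thesis by (auto simp: add.commute)
    qed
  qed
  then have "card (complexes_with n c \<inter> complexes_with n d) \<le> card {\<lambda>k. unit_vec c k + unit_vec d k}"
    by (intro card_mono) auto
  then show ?thesis by simp
qed

text \<open>Either one endpoint of the edge uses both c and d (there is at most one such
  complex), or one endpoint uses c and the other d.\<close>
lemma card_edges_through_le:
  assumes "c \<noteq> d"
  shows "card (edges_through n c d) \<le> 2 * (n + 1) ^ 2"
proof -
  let ?I = "complexes_with n c \<inter> complexes_with n d"
  let ?A = "?I \<times> C0 n \<union> complexes_with n c \<times> complexes_with n d"
  have "edges_through n c d \<subseteq> (\<lambda>(a, b). {a, b}) ` ?A"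
  proof
    fix e assume "e \<in> edges_through n c d"
    then have e: "e \<in> possible_edges n" "c \<in> edge_support e" "d \<in> edge_support e"
      unfolding edges_through_def by auto
    then obtain y y' where yy: "e = {y, y'}" "y \<in> C0 n" "y' \<in> C0 n"
      unfolding possible_edges_def by blast
    have "y c \<noteq> y' c" "y d \<noteq> y' d" using e(2,3) yy(1) by (auto simp: edge_support_doubleton)
    then have "y \<in> complexes_with n c \<or> y' \<in> complexes_with n c"
      "y \<in> complexes_with n d \<or> y' \<in> complexes_with n d"
      using yy(2,3) unfolding complexes_with_def by auto
    then have "(y, y') \<in> ?A \<or> (y', y) \<in> ?A" using yy(2,3) by blast
    then show "e \<in> (\<lambda>(a, b). {a, b}) ` ?A"
    proof
      assume "(y, y') \<in> ?A"
      then show ?thesis unfolding yy(1) by (rule rev_image_eqI) simp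
    next
      assume "(y', y) \<in> ?A"
      then show ?thesis unfolding yy(1) by (rule rev_image_eqI) (simp add: insert_commute)
    qed
  qed
  moreover have "finite ?A" unfolding complexes_with_def using finite_C0 by simp
  ultimately have "card (edges_through n c d) \<le> card ?A"
    by (rule surj_card_le[rotated])
  also have "\<dots> \<le> card ?I * card (C0 n) + card (complexes_with n c) * card (complexes_with n d)"
    using card_Un_le[of "?I \<times> C0 n" "complexes_with n c \<times> complexes_with n d"]
    by (simp add: card_cartesian_product)
  also have "\<dots> \<le> 1 * (n + 1) ^ 2 + (n + 1) * (n + 1)"
    using card_complexes_with_Int_le[OF assms] card_C0_le card_complexes_with_le
    by (intro add_mono mult_mono) auto
  finally show ?thesis by (simp add: power2_eq_square)
qed

lemma card_edges_supported_in_le: "card (edges_supported_in n c) \<le> 3 * (n + 1) ^ 2"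
proof -
  let ?A = "C0 n \<times> {..2::nat}"
  have "edges_supported_in n c \<subseteq> (\<lambda>(y, j). {y, y(c := j)}) ` ?A"
  proof
    fix e assume "e \<in> edges_supported_in n c"
    then have e: "e \<in> possible_edges n" "edge_support e \<subseteq> {c}"
      unfolding edges_supported_in_def by auto
    then obtain y y' where yy: "e = {y, y'}" "y \<in> C0 n" "y' \<in> C0 n"
      unfolding possible_edges_def by blast
    have "y i = y' i" if "i \<noteq> c" for i using that e(2) yy(1) by (auto simp: edge_support_doubleton)
    then have "y' = y(c := y' c)" by (auto simp: fun_eq_iff)
    moreover have "y' c \<le> 2" using C0_le_2[OF yy(3)] .
    ultimately show "e \<in> (\<lambda>(y, j). {y, y(c := j)}) ` ?A"
      using yy(1,2) by (intro image_eqI[of _ _ "(y, y' c)"]) auto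
  qed
  then have "card (edges_supported_in n c) \<le> card ?A"
    using finite_C0 by (intro surj_card_le) auto
  also have "\<dots> = 3 * card (C0 n)" by (simp add: card_cartesian_product)
  also have "\<dots> \<le> 3 * (n + 1) ^ 2" using card_C0_le by simp
  finally show ?thesis .
qed

section \<open>Paths and cycles in a hypergraph\<close>

definition hpath :: "('e \<Rightarrow> 'v set) \<Rightarrow> 'e set \<Rightarrow> nat \<Rightarrow> (nat \<Rightarrow> 'e) \<Rightarrow> (nat \<Rightarrow> 'v) \<Rightarrow> bool" where
  "hpath S R k es cs \<longleftrightarrow> 1 \<le> k \<and> inj_on es {..<k} \<and> es ` {..<k} \<subseteq> R \<and> inj_on cs {..<k-1} \<and>
     (\<forall>i. Suc i < k \<longrightarrow> cs i \<in> S (es i) \<and> cs i \<in> S (es (Suc i)))"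

definition cyc_prev :: "nat \<Rightarrow> nat \<Rightarrow> nat" where
  "cyc_prev k i = (if i = 0 then k - 1 else i - 1)"

definition hcycle :: "('e \<Rightarrow> 'v set) \<Rightarrow> 'e set \<Rightarrow> nat \<Rightarrow> (nat \<Rightarrow> 'e) \<Rightarrow> (nat \<Rightarrow> 'v) \<Rightarrow> bool" where
  "hcycle S R k es cs \<longleftrightarrow> 2 \<le> k \<and> inj_on es {..<k} \<and> es ` {..<k} \<subseteq> R \<and> inj_on cs {..<k} \<and>
     (\<forall>i<k. cs i \<in> S (es i) \<and> cs (cyc_prev k i) \<in> S (es i))"

definition pendant_hpath :: "('e \<Rightarrow> 'v set) \<Rightarrow> 'e set \<Rightarrow> nat \<Rightarrow> (nat \<Rightarrow> 'e) \<Rightarrow> (nat \<Rightarrow> 'v) \<Rightarrow> bool" where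
  "pendant_hpath S R k es cs \<longleftrightarrow> 2 \<le> k \<and> hpath S R k es cs \<and> S (es 0) \<subseteq> {cs 0} \<and> S (es (k-1)) \<subseteq> {cs (k-2)}"

lemma hpath_length_le_card:
  assumes "hpath S R k es cs" "finite R"
  shows "k \<le> card R"
proof -
  have "card (es ` {..<k}) = k" using assms(1) unfolding hpath_def by (simp add: card_image)
  moreover have "card (es ` {..<k}) \<le> card R" using assms unfolding hpath_def by (simp add: card_mono)
  ultimately show ?thesis by simp
qed

lemma inj_on_shift:
  fixes f :: "nat \<Rightarrow> 'a"
  assumes "inj_on f {..<k}" "a + m \<le> k"
  shows "inj_on (\<lambda>i. f (a + i)) {..<m}"
proof (rule inj_onI)
  fix x y assume "x \<in> {..<m}" "y \<in> {..<m}" "f (a + x) = f (a + y)"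
  then have "a + x = a + y" using assms(2) by (intro inj_onD[OF assms(1)]) auto
  then show "x = y" by simp
qed

lemma hpath_segment_hcycle:
  assumes P: "hpath S R k es cs" and ab: "a < b" "b < k"
    and c: "c \<in> S (es b)" "c \<in> S (es a)" "c \<notin> cs ` {a..<b}"
  shows "hcycle S R (Suc (b - a)) (\<lambda>i. es (a + i)) ((\<lambda>i. cs (a + i))(b - a := c))"
proof -
  let ?m = "b - a"
  have pc: "\<And>i. Suc i < k \<Longrightarrow> cs i \<in> S (es i) \<and> cs i \<in> S (es (Suc i))"
    using P unfolding hpath_def by auto
  have "inj_on (\<lambda>i. es (a + i)) {..<Suc ?m}"
    using P ab unfolding hpath_def by (intro inj_on_shift) auto
  moreover have "inj_on ((\<lambda>i. cs (a + i))(?m := c)) {..<Suc ?m}"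
  proof -
    have "inj_on (\<lambda>i. cs (a + i)) {..<?m}"
      using P ab unfolding hpath_def by (intro inj_on_shift) auto
    moreover have "c \<notin> (\<lambda>i. cs (a + i)) ` {..<?m}"
      using c(3) ab by (auto simp: image_iff Bex_def)
    ultimately show ?thesis by (simp add: lessThan_Suc inj_on_fun_updI)
  qed
  moreover have "\<forall>i<Suc ?m. ((\<lambda>i. cs (a + i))(?m := c)) i \<in> S (es (a + i)) \<and>
      ((\<lambda>i. cs (a + i))(?m := c)) (cyc_prev (Suc ?m) i) \<in> S (es (a + i))"
  proof (intro allI impI conjI)
    fix i assume i: "i < Suc ?m"
    show "((\<lambda>i. cs (a + i))(?m := c)) i \<in> S (es (a + i))"
      using pc[of "a + i"] c(1) i ab by (cases "i = ?m") auto
    show "((\<lambda>i. cs (a + i))(?m := c)) (cyc_prev (Suc ?m) i) \<in> S (es (a + i))"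
      using pc[of "a + (i - 1)"] c(2) i ab by (cases "i = 0") (auto simp: cyc_prev_def)
  qed
  moreover have "(\<lambda>i. es (a + i)) ` {..<Suc ?m} \<subseteq> R"
    using P ab unfolding hpath_def by auto
  ultimately show ?thesis using ab unfolding hcycle_def by simp
qed

lemma hpath_extend:
  assumes P: "hpath S R k es cs" and f: "f \<in> R" "f \<notin> es ` {..<k}"
    and c: "c \<in> S (es (k - 1))" "c \<in> S f" "c \<notin> cs ` {..<k - 1}"
  shows "hpath S R (Suc k) (es(k := f)) (cs(k - 1 := c))"
proof -
  have k: "1 \<le> k" and pc: "\<And>i. Suc i < k \<Longrightarrow> cs i \<in> S (es i) \<and> cs i \<in> S (es (Suc i))"
    using P unfolding hpath_def by auto
  have "inj_on (es(k := f)) {..<Suc k}"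
    using P f(2) unfolding hpath_def by (simp add: lessThan_Suc inj_on_fun_updI)
  moreover have "{..<Suc k - 1} = insert (k - 1) {..<k - 1}" using k by auto
  then have "inj_on (cs(k - 1 := c)) {..<Suc k - 1}"
    using P c(3) unfolding hpath_def by (simp add: inj_on_fun_updI)
  moreover have "(es(k := f)) ` {..<Suc k} \<subseteq> R" using P f(1) unfolding hpath_def by auto
  moreover have "(cs(k - 1 := c)) i \<in> S ((es(k := f)) i) \<and> (cs(k - 1 := c)) i \<in> S ((es(k := f)) (Suc i))"
    if "Suc i < Suc k" for i
    using that pc[of i] c k by (cases "i = k - 1") auto
  ultimately show ?thesis unfolding hpath_def by simp
qed

lemma inj_on_reflect:
  fixes f :: "nat \<Rightarrow> 'a"
  assumes "inj_on f {..<m}"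
  shows "inj_on (\<lambda>i. f (m - 1 - i)) {..<m}"
proof (rule inj_onI)
  fix x y assume "x \<in> {..<m}" "y \<in> {..<m}" "f (m - 1 - x) = f (m - 1 - y)"
  then have "m - 1 - x = m - 1 - y" by (intro inj_onD[OF assms]) auto
  then show "x = y" using \<open>x \<in> {..<m}\<close> \<open>y \<in> {..<m}\<close> by simp
qed

lemma hpath_reverse:
  assumes P: "hpath S R k es cs"
  shows "hpath S R k (\<lambda>i. es (k - 1 - i)) (\<lambda>i. cs (k - 2 - i))"
proof -
  have k: "1 \<le> k" and img: "es ` {..<k} \<subseteq> R"
    and pc: "\<And>i. Suc i < k \<Longrightarrow> cs i \<in> S (es i) \<and> cs i \<in> S (es (Suc i))"
    using P unfolding hpath_def by auto
  have "inj_on (\<lambda>i. es (k - 1 - i)) {..<k}" "inj_on (\<lambda>i. cs (k - 1 - 1 - i)) {..<k - 1}"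
    using P unfolding hpath_def by (blast intro: inj_on_reflect)+
  moreover have "(\<lambda>i. es (k - 1 - i)) ` {..<k} \<subseteq> R" using img k by auto
  moreover have "cs (k - 2 - i) \<in> S (es (k - 1 - i)) \<and> cs (k - 2 - i) \<in> S (es (k - 1 - Suc i))"
    if "Suc i < k" for i
    using pc[of "k - 2 - i"] that by (simp add: Suc_diff_Suc numeral_2_eq_2)
  ultimately show ?thesis using k unfolding hpath_def by (simp add: numeral_2_eq_2)
qed

text \<open>If some other vertex c of the last edge lay in a second edge f, then either c is
  a vertex of the path, or f is an edge of the path (both close a cycle), or f
  extends the path.\<close>
lemma hpath_last_edge_pendant:
  assumes P: "hpath S R k es cs" and k: "2 \<le> k"
    and max: "\<And>es' cs'. \<not> hpath S R (Suc k) es' cs'"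
    and deg: "\<And>e c. e \<in> R \<Longrightarrow> c \<in> S e \<Longrightarrow> \<exists>f\<in>R. f \<noteq> e \<and> c \<in> S f"
    and nocyc: "\<And>k es cs. \<not> hcycle S R k es cs"
  shows "S (es (k-1)) \<subseteq> {cs (k-2)}"
proof
  fix c assume c: "c \<in> S (es (k-1))"
  have img: "es ` {..<k} \<subseteq> R" and injes: "inj_on es {..<k}" and injcs: "inj_on cs {..<k-1}"
    and pc: "\<And>i. Suc i < k \<Longrightarrow> cs i \<in> S (es i) \<and> cs i \<in> S (es (Suc i))"
    using P unfolding hpath_def by auto
  have ek: "es (k-1) \<in> R" using img k by auto
  show "c \<in> {cs (k-2)}"
  proof (rule ccontr)
    assume nc: "c \<notin> {cs (k-2)}"
    obtain f where f: "f \<in> R" "f \<noteq> es (k-1)" "c \<in> S f" using deg[OF ek c] by blast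
    show False
    proof (cases "c \<in> cs ` {..<k-1}")
      case True
      then obtain j where j: "j < k - 1" "c = cs j" by auto
      have "j \<noteq> k - 2" using nc j by auto
      then have jk: "Suc j < k - 1" using j by simp
      have "c \<in> S (es (Suc j))" using pc[of j] j by simp
      moreover have "c \<notin> cs ` {Suc j..<k-1}"
      proof
        assume "c \<in> cs ` {Suc j..<k-1}"
        then obtain i where i: "i \<in> {Suc j..<k-1}" "cs i = cs j" using j by auto
        then have "i = j" using inj_onD[OF injcs, of i j] j by auto
        then show False using i by simp
      qed
      ultimately show False using hpath_segment_hcycle[OF P jk, of c] c k nocyc by simp
    next
      case False
      show False
      proof (cases "f \<in> es ` {..<k}")
        case True
        then obtain j where j: "j < k" "f = es j" by auto
        then have jk: "j < k - 1" using f(2) by (cases "j = k - 1") auto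
        have "c \<notin> cs ` {j..<k-1}" using False by auto
        then show False using hpath_segment_hcycle[OF P jk, of c] c k f j nocyc by simp
      next
        case fT: False
        show False using hpath_extend[OF P f(1) fT c f(3) False] max by blast
      qed
    qed
  qed
qed

lemma hcycle_or_pendant_hpath:
  assumes fin: "finite R" and ne: "R \<noteq> {}" and nemp: "\<And>e. e \<in> R \<Longrightarrow> S e \<noteq> {}"
    and deg: "\<And>e c. e \<in> R \<Longrightarrow> c \<in> S e \<Longrightarrow> \<exists>f\<in>R. f \<noteq> e \<and> c \<in> S f"
  shows "(\<exists>k es cs. hcycle S R k es cs) \<or> (\<exists>k es cs. pendant_hpath S R k es cs)"
proof (rule ccontr)
  assume contra: "\<not> ?thesis"
  then have nocyc: "\<And>k es cs. \<not> hcycle S R k es cs" by blast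
  let ?P = "{k. \<exists>es cs. hpath S R k es cs}"
  have "?P \<subseteq> {..card R}" using hpath_length_le_card[OF _ fin] by blast
  then have finP: "finite ?P" using finite_subset by blast
  obtain e where e: "e \<in> R" using ne by blast
  obtain c where c: "c \<in> S e" using nemp[OF e] by blast
  obtain f where f: "f \<in> R" "f \<noteq> e" "c \<in> S f" using deg[OF e c] by blast
  have "hpath S R 2 (\<lambda>i. if i = 0 then e else f) (\<lambda>_. c)"
    unfolding hpath_def using e f c
    by (auto simp: inj_on_def lessThan_def less_Suc_eq numeral_2_eq_2)
  then have twoP: "2 \<in> ?P" by blast
  define K where "K = Max ?P"
  have KP: "K \<in> ?P" unfolding K_def using finP twoP by (intro Max_in) auto
  have K2: "2 \<le> K" unfolding K_def using finP twoP by (simp add: Max_ge)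
  have max: "\<And>es' cs'. \<not> hpath S R (Suc K) es' cs'"
  proof
    fix es' cs' assume "hpath S R (Suc K) es' cs'"
    then have "Suc K \<in> ?P" by blast
    then have "Suc K \<le> K" unfolding K_def using finP by (simp add: Max_ge)
    then show False by simp
  qed
  obtain es cs where P: "hpath S R K es cs" using KP by blast
  have "S (es (K - 1)) \<subseteq> {cs (K - 2)}" by (rule hpath_last_edge_pendant[OF P K2 max deg nocyc])
  moreover have "S (es (K - 1 - (K - 1))) \<subseteq> {cs (K - 2 - (K - 2))}"
    by (rule hpath_last_edge_pendant[OF hpath_reverse[OF P] K2 max deg nocyc])
  ultimately have "pendant_hpath S R K es cs" unfolding pendant_hpath_def using K2 P by simp
  then show False using contra by blast
qed

lemma hcycle_mono: "hcycle S R k es cs \<Longrightarrow> R \<subseteq> R' \<Longrightarrow> hcycle S R' k es cs"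
  unfolding hcycle_def by blast

lemma pendant_hpath_mono: "pendant_hpath S R k es cs \<Longrightarrow> R \<subseteq> R' \<Longrightarrow> pendant_hpath S R' k es cs"
  unfolding pendant_hpath_def hpath_def by blast

definition family_indep :: "'e set \<Rightarrow> ('e \<Rightarrow> 'v \<Rightarrow> real) \<Rightarrow> bool" where
  "family_indep E w \<longleftrightarrow> (\<forall>a. (\<forall>i. (\<Sum>e\<in>E. a e * w e i) = 0) \<longrightarrow> (\<forall>e\<in>E. a e = 0))"

lemma family_indepD:
  "family_indep E w \<Longrightarrow> (\<And>i. (\<Sum>e\<in>E. a e * w e i) = 0) \<Longrightarrow> e \<in> E \<Longrightarrow> a e = 0"
  unfolding family_indep_def by blast

text \<open>The edges carrying a nonzero coefficient in a linear relation cover each of their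
  species at least twice, since otherwise that coordinate of the relation would have a
  single nonzero term.\<close>
lemma support_vectors_independent:
  fixes w :: "'e \<Rightarrow> 'v \<Rightarrow> real"
  assumes "finite E" and nonempty: "\<And>e. e \<in> E \<Longrightarrow> S e \<noteq> {}"
    and no_cycle: "\<And>k es cs. \<not> hcycle S E k es cs"
    and no_pendant: "\<And>k es cs. \<not> pendant_hpath S E k es cs"
    and support: "\<And>e i. e \<in> E \<Longrightarrow> w e i \<noteq> 0 \<longleftrightarrow> i \<in> S e"
  shows "family_indep E w"
  unfolding family_indep_def
proof (intro allI impI)
  fix a assume relation: "\<forall>i. (\<Sum>e\<in>E. a e * w e i) = 0"
  let ?R = "{e\<in>E. a e \<noteq> 0}"
  show "\<forall>e\<in>E. a e = 0"
  proof (rule ccontr)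
    assume "\<not> (\<forall>e\<in>E. a e = 0)"
    then have "?R \<noteq> {}" by blast
    have covered_twice: "\<exists>f\<in>?R. f \<noteq> e \<and> c \<in> S f" if e: "e \<in> ?R" and c: "c \<in> S e" for e c
    proof (rule ccontr)
      assume "\<not> (\<exists>f\<in>?R. f \<noteq> e \<and> c \<in> S f)"
      then have "a f * w f c = 0" if "f \<in> E - {e}" for f
        using that support[of f c] by auto
      then have "(\<Sum>f\<in>E - {e}. a f * w f c) = 0" by (intro sum.neutral) blast
      then have "(\<Sum>f\<in>E. a f * w f c) = a e * w e c"
        using \<open>finite E\<close> e by (simp add: sum.remove[of E e])
      then show False using spec[OF relation, of c] support[of e c] e c by simp
    qed
    have "(\<exists>k es cs. hcycle S ?R k es cs) \<or> (\<exists>k es cs. pendant_hpath S ?R k es cs)"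
      using \<open>finite E\<close> \<open>?R \<noteq> {}\<close> nonempty covered_twice by (intro hcycle_or_pendant_hpath) auto
    moreover have "?R \<subseteq> E" by blast
    ultimately show False
      using hcycle_mono[of S ?R _ _ _ E] pendant_hpath_mono[of S ?R _ _ _ E] no_cycle no_pendant
      by blast
  qed
qed

section \<open>Deficiency of sparse networks\<close>

text \<open>The two reactions of an edge have reaction vectors edge_vec e and - edge_vec e,
  for an arbitrarily chosen orientation of e.\<close>
definition edge_orientation :: "complex set \<Rightarrow> complex \<times> complex" where
  "edge_orientation e = (SOME (y, y'). e = {y, y'} \<and> y \<noteq> y')"

definition edge_vec :: "complex set \<Rightarrow> nat \<Rightarrow> real" where
  "edge_vec e = (case edge_orientation e of (y, y') \<Rightarrow> reaction_vec y y')"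

lemma edge_orientation_cases:
  assumes "e = {y, y'}" "y \<noteq> y'"
  shows "edge_orientation e = (y, y') \<or> edge_orientation e = (y', y)"
proof -
  have "\<exists>p. case p of (y, y') \<Rightarrow> e = {y, y'} \<and> y \<noteq> y'" using assms by auto
  then have "case edge_orientation e of (z, z') \<Rightarrow> e = {z, z'} \<and> z \<noteq> z'"
    unfolding edge_orientation_def by (rule someI_ex)
  then show ?thesis using assms by (auto simp: doubleton_eq_iff split: prod.splits)
qed

lemma reaction_vec_edge_vec:
  assumes "y \<noteq> y'"
  shows "reaction_vec y y' = edge_vec {y, y'} \<or> reaction_vec y y' = - edge_vec {y, y'}"
  using edge_orientation_cases[OF refl assms]
  by (auto simp: edge_vec_def reaction_vec_def fun_eq_iff)

lemma edge_vec_neq_0: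
  assumes "y \<noteq> y'"
  shows "edge_vec {y, y'} i \<noteq> 0 \<longleftrightarrow> i \<in> edge_support {y, y'}"
proof -
  have "edge_vec {y, y'} i = reaction_vec y y' i \<or> edge_vec {y, y'} i = - reaction_vec y y' i"
    using reaction_vec_edge_vec[OF assms] by auto
  then show ?thesis by (auto simp: edge_support_doubleton reaction_vec_def)
qed

lemma complexes_network_of:
  assumes "E \<subseteq> possible_edges n"
  shows "complexes (network_of E) = \<Union>E"
proof
  show "complexes (network_of E) \<subseteq> \<Union>E"
    unfolding complexes_def network_of_def by auto
  show "\<Union>E \<subseteq> complexes (network_of E)"
  proof
    fix y assume "y \<in> \<Union>E"
    then obtain e where e: "e \<in> E" "y \<in> e" by blast
    then obtain y' where "e = {y, y'}" "y \<noteq> y'"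
      using assms by (blast elim: possible_edges_memE)
    then have "(y, y') \<in> network_of E" using e(1) unfolding network_of_def by blast
    then show "y \<in> complexes (network_of E)" unfolding complexes_def by force
  qed
qed

lemma card_complexes_network_of_matching:
  assumes "E \<subseteq> possible_edges n" "pairwise disjnt E"
  shows "card (complexes (network_of E)) = 2 * card E"
proof -
  have card_edge: "card e = 2" if e: "e \<in> E" for e
  proof -
    obtain y y' where "e = {y, y'}" "y \<noteq> y'"
      using e assms(1) possible_edgesE by blast
    then show ?thesis by simp
  qed
  have "card (\<Union>E) = sum card E"
  proof (rule card_Union_disjoint[OF assms(2)])
    show "finite e" if "e \<in> E" for e
      using card_edge[OF that] by (simp add: card_ge_0_finite)
  qed
  then show ?thesis using card_edge complexes_network_of[OF assms(1)] by simp
qed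

lemma network_of_linkage_within_edge:
  assumes "pairwise disjnt E" "e \<in> E" "y \<in> e"
    and "(y, z) \<in> (network_of E \<union> (network_of E)\<inverse>)\<^sup>*"
  shows "z \<in> e"
  using assms(4)
proof (induction rule: rtrancl_induct)
  case base
  then show ?case using assms(3) .
next
  case (step u v)
  from step(2) have "{u, v} \<in> E"
    unfolding network_of_def by (auto simp: insert_commute)
  moreover have "\<not> disjnt {u, v} e" using step.IH by (auto simp: disjnt_def)
  ultimately have "{u, v} = e" using pairwiseD[OF assms(1) _ assms(2)] by blast
  then show ?case by blast
qed

lemma num_linkage_classes_network_of_matching:
  assumes E: "E \<subseteq> possible_edges n" and disjoint: "pairwise disjnt E"
  shows "num_linkage_classes (network_of E) = card E"
proof -
  let ?R = "network_of E"
  let ?Rel = "(?R \<union> ?R\<inverse>)\<^sup>* \<inter> (complexes ?R \<times> complexes ?R)"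
  have complexes: "complexes ?R = \<Union>E" by (rule complexes_network_of[OF E])
  have linkage_class: "?Rel `` {y} = e" if e: "e \<in> E" "y \<in> e" for e y
  proof
    show "?Rel `` {y} \<subseteq> e"
      using network_of_linkage_within_edge[OF disjoint e] by blast
    show "e \<subseteq> ?Rel `` {y}"
    proof
      fix z assume z: "z \<in> e"
      obtain y' where "e = {y, y'}" "y \<noteq> y'"
        using e E possible_edges_memE by blast
      then have "(y, z) \<in> ?R" if "y \<noteq> z"
        using e(1) z that unfolding network_of_def by auto
      then have "(y, z) \<in> (?R \<union> ?R\<inverse>)\<^sup>*" by (cases "y = z") auto
      then show "z \<in> ?Rel `` {y}" using complexes e z by auto
    qed
  qed
  have "complexes ?R // ?Rel = E"
  proof
    show "complexes ?R // ?Rel \<subseteq> E"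
    proof
      fix X assume "X \<in> complexes ?R // ?Rel"
      then obtain y where "y \<in> complexes ?R" "X = ?Rel `` {y}" by (rule quotientE)
      then show "X \<in> E" using complexes linkage_class by auto
    qed
    show "E \<subseteq> complexes ?R // ?Rel"
    proof
      fix e assume e: "e \<in> E"
      then obtain y where "y \<in> e" using E possible_edgesE by blast
      then have "y \<in> complexes ?R" "?Rel `` {y} = e" using complexes linkage_class[OF e] e by auto
      then show "e \<in> complexes ?R // ?Rel" using quotientI[of y "complexes ?R" ?Rel] by simp
    qed
  qed
  then show ?thesis unfolding num_linkage_classes_def by simp
qed

lemma sum_two_point_weights:
  fixes f :: "'a \<Rightarrow> real"
  assumes "finite A" "u \<in> A" "v \<in> A" "u \<noteq> v"
  shows "(\<Sum>x\<in>A. (if x = u then \<alpha> else if x = v then \<beta> else 0) * f x) = \<alpha> * f u + \<beta> * f v"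
proof -
  have "(\<Sum>x\<in>A. (if x = u then \<alpha> else if x = v then \<beta> else 0) * f x)
      = (\<Sum>x\<in>{u, v}. (if x = u then \<alpha> else if x = v then \<beta> else 0) * f x)"
    using assms by (intro sum.mono_neutral_right) auto
  then show ?thesis using assms(4) by simp
qed

lemma family_indep_inj_on:
  fixes w :: "'e \<Rightarrow> 'v \<Rightarrow> real"
  assumes "finite E" "family_indep E w"
  shows "inj_on w E"
proof (rule inj_onI, rule ccontr)
  fix e f assume ef: "e \<in> E" "f \<in> E" "w e = w f" "e \<noteq> f"
  let ?a = "\<lambda>g. if g = e then 1 else if g = f then -1 else 0 :: real"
  have relation: "(\<Sum>g\<in>E. ?a g * w g i) = 0" for i
    using sum_two_point_weights[OF assms(1) ef(1,2,4), of 1 "-1" "\<lambda>g. w g i"] ef(3) by simp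
  have "?a e = 0" using family_indepD[OF assms(2) relation ef(1)] by simp
  then show False by simp
qed

lemma lin_indep_image:
  fixes w :: "'e \<Rightarrow> nat \<Rightarrow> real"
  assumes "finite E" "family_indep E w"
  shows "lin_indep (w ` E)"
  unfolding lin_indep_def
proof (intro conjI allI impI ballI)
  show "finite (w ` E)" using assms(1) by simp
  fix c v assume "\<forall>i. (\<Sum>v\<in>w ` E. c v * v i) = 0" and v: "v \<in> w ` E"
  then have relation: "(\<Sum>e\<in>E. c (w e) * w e i) = 0" for i
    using family_indep_inj_on[OF assms] by (simp add: sum.reindex)
  have "c (w e) = 0" if "e \<in> E" for e
    using family_indepD[OF assms(2) relation that] by simp
  then show "c v = 0" using v by blast
qed

text \<open>Two members of an independent set cannot be v and - v, so choosing for each member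
  an edge it comes from is injective.\<close>
lemma card_lin_indep_signed_le:
  fixes w :: "'e \<Rightarrow> nat \<Rightarrow> real"
  assumes "finite E" "B \<subseteq> w ` E \<union> uminus ` w ` E" "lin_indep B"
  shows "card B \<le> card E"
proof -
  have B_relation: "c u = 0" if "\<forall>i. (\<Sum>x\<in>B. c x * x i) = 0" "u \<in> B" for c u
    using assms(3) that unfolding lin_indep_def by blast
  define h where "h v = (SOME e. e \<in> E \<and> (v = w e \<or> v = - w e))" for v
  have h: "h v \<in> E \<and> (v = w (h v) \<or> v = - w (h v))" if "v \<in> B" for v
  proof -
    have "\<exists>e. e \<in> E \<and> (v = w e \<or> v = - w e)" using that assms(2) by blast
    then show ?thesis unfolding h_def by (rule someI_ex)
  qed
  have "inj_on h B"
  proof (rule inj_onI, rule ccontr)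
    fix u v assume uv: "u \<in> B" "v \<in> B" "h u = h v" "u \<noteq> v"
    then have "v = - u" using h[OF uv(1)] h[OF uv(2)] by auto
    let ?c = "\<lambda>x. if x = u then 1 else if x = v then 1 else 0 :: real"
    have "finite B" using assms(3) unfolding lin_indep_def by blast
    then have "\<forall>i. (\<Sum>x\<in>B. ?c x * x i) = 0"
      using sum_two_point_weights[OF _ uv(1,2,4), of 1 1] \<open>v = - u\<close> by simp
    then have "?c u = 0" by (rule B_relation[OF _ uv(1)])
    then show False by simp
  qed
  then have "card B = card (h ` B)" by (simp add: card_image)
  also have "\<dots> \<le> card E" using h assms(1) by (intro card_mono) auto
  finally show ?thesis .
qed

lemma span_dim_signed_family:
  fixes w :: "'e \<Rightarrow> nat \<Rightarrow> real"
  assumes "finite E" "family_indep E w"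
    and D: "w ` E \<subseteq> D" "D \<subseteq> w ` E \<union> uminus ` w ` E"
  shows "span_dim D = card E"
proof -
  let ?Bs = "{B. B \<subseteq> D \<and> lin_indep B}"
  have "finite D" using assms(1) by (intro finite_subset[OF D(2)]) simp
  then have "finite (card ` ?Bs)" by simp
  moreover have "w ` E \<in> ?Bs" using lin_indep_image[OF assms(1,2)] D(1) by blast
  then have "card (w ` E) \<in> card ` ?Bs" by (rule imageI)
  then have "card E \<in> card ` ?Bs"
    by (simp only: card_image[OF family_indep_inj_on[OF assms(1,2)]])
  moreover have "x \<le> card E" if x: "x \<in> card ` ?Bs" for x
  proof -
    obtain B where B: "B \<subseteq> D" "lin_indep B" "x = card B" using x by blast
    have "B \<subseteq> w ` E \<union> uminus ` w ` E" using B(1) D(2) by (rule subset_trans)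
    from card_lin_indep_signed_le[OF assms(1) this B(2)] show ?thesis using B(3) by simp
  qed
  ultimately have "Max (card ` ?Bs) = card E" by (intro Max_eqI)
  then show ?thesis unfolding span_dim_def .
qed

lemma edge_orientation_in_network_of:
  assumes "E \<subseteq> possible_edges n" "e \<in> E"
  shows "edge_orientation e \<in> network_of E"
proof -
  obtain y y' where "e = {y, y'}" "y \<noteq> y'" using assms by (auto elim!: possible_edgesE)
  then show ?thesis
    using edge_orientation_cases[of e y y'] assms(2) unfolding network_of_def
    by (auto simp: insert_commute)
qed

lemma stoich_dim_network_of:
  assumes E: "E \<subseteq> possible_edges n"
    and independent: "family_indep E edge_vec"
  shows "stoich_dim (network_of E) = card E"
  unfolding stoich_dim_def
proof (rule span_dim_signed_family[OF _ independent])
  show "finite E" using E finite_possible_edges finite_subset by blast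
  show "edge_vec ` E \<subseteq> {reaction_vec y y' |y y'. (y, y') \<in> network_of E}"
    using edge_orientation_in_network_of[OF E] unfolding edge_vec_def
    by (force split: prod.splits)
  show "{reaction_vec y y' |y y'. (y, y') \<in> network_of E} \<subseteq> edge_vec ` E \<union> uminus ` edge_vec ` E"
    using reaction_vec_edge_vec unfolding network_of_def by blast
qed

lemma deficiency_network_of_matching:
  assumes "E \<subseteq> possible_edges n" "pairwise disjnt E" "family_indep E edge_vec"
  shows "deficiency (network_of E) = 0"
  using assms unfolding deficiency_def
  by (simp add: card_complexes_network_of_matching num_linkage_classes_network_of_matching
      stoich_dim_network_of)

lemma deficiency_network_of_sparse:
  assumes E: "E \<subseteq> possible_edges n" and "pairwise disjnt E"
    and "\<And>k es cs. \<not> hcycle edge_support E k es cs"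
    and "\<And>k es cs. \<not> pendant_hpath edge_support E k es cs"
  shows "deficiency (network_of E) = 0"
proof (rule deficiency_network_of_matching[OF E \<open>pairwise disjnt E\<close>])
  have support: "edge_vec e i \<noteq> 0 \<longleftrightarrow> i \<in> edge_support e" if e: "e \<in> E" for e i
  proof -
    obtain y y' where "e = {y, y'}" "y \<noteq> y'" using e E possible_edgesE by blast
    then show ?thesis using edge_vec_neq_0 by blast
  qed
  have "finite E" using E finite_possible_edges finite_subset by blast
  moreover have "edge_support e \<noteq> {}" if "e \<in> E" for e
    using that E edge_support_nonempty by blast
  ultimately show "family_indep E edge_vec"
    using support_vectors_independent[of E edge_support edge_vec] assms(3,4) support by blast
qed

section \<open>Counting bad configurations\<close>

definition inj_seqs :: "nat \<Rightarrow> nat \<Rightarrow> (nat \<Rightarrow> nat) set" where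
  "inj_seqs n k = {cs \<in> PiE {..<k} (\<lambda>_. {..<n}). inj_on cs {..<k}}"

lemma finite_inj_seqs: "finite (inj_seqs n k)"
  unfolding inj_seqs_def by (rule finite_subset[of _ "PiE {..<k} (\<lambda>_. {..<n})"]) (auto intro: finite_PiE)

lemma card_inj_seqs_le: "card (inj_seqs n k) \<le> n ^ k"
proof -
  have "card (inj_seqs n k) \<le> card (PiE {..<k} (\<lambda>_. {..<n}))"
    unfolding inj_seqs_def by (rule card_mono) (auto intro: finite_PiE)
  then show ?thesis by (simp add: card_PiE)
qed

lemma card_Sigma_PiE_le:
  assumes "finite A" and "\<And>a i. a \<in> A \<Longrightarrow> i < k \<Longrightarrow> finite (B a i)"
    and "\<And>a i. a \<in> A \<Longrightarrow> i < k \<Longrightarrow> card (B a i) \<le> b"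
    and T: "T \<subseteq> Sigma A (\<lambda>a. PiE {..<k} (B a))"
  shows "finite T \<and> card T \<le> card A * b ^ k"
proof -
  have fin_PiE: "finite (PiE {..<k} (B a))" if "a \<in> A" for a
    using assms(2) that by (intro finite_PiE) auto
  then have fin: "finite (Sigma A (\<lambda>a. PiE {..<k} (B a)))"
    using assms(1) by (intro finite_SigmaI)
  have "card T \<le> card (Sigma A (\<lambda>a. PiE {..<k} (B a)))" using fin T by (rule card_mono)
  also have "\<dots> = (\<Sum>a\<in>A. card (PiE {..<k} (B a)))"
    using assms(1) fin_PiE by simp
  also have "\<dots> = (\<Sum>a\<in>A. \<Prod>i<k. card (B a i))" by (simp add: card_PiE)
  also have "\<dots> \<le> (\<Sum>a\<in>A. \<Prod>i<k. b)"
    using assms(3) by (intro sum_mono prod_mono) auto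
  finally show ?thesis using finite_subset[OF T fin] by simp
qed

lemma cyc_prev_less: "2 \<le> k \<Longrightarrow> i < k \<Longrightarrow> cyc_prev k i < k \<and> cyc_prev k i \<noteq> i"
  unfolding cyc_prev_def by auto

definition cycle_templates :: "nat \<Rightarrow> nat \<Rightarrow> ((nat \<Rightarrow> nat) \<times> (nat \<Rightarrow> complex set)) set" where
  "cycle_templates n k = {(cs, es). cs \<in> inj_seqs n k \<and>
     es \<in> PiE {..<k} (\<lambda>i. edges_through n (cs (cyc_prev k i)) (cs i)) \<and> inj_on es {..<k}}"

text \<open>Candidates for the i-th edge of a pendant path with k edges and junction
  species cs 0, ..., cs (k - 2).\<close>
definition pendant_slot :: "nat \<Rightarrow> nat \<Rightarrow> (nat \<Rightarrow> nat) \<Rightarrow> nat \<Rightarrow> complex set set" where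
  "pendant_slot n k cs i =
     (if i = 0 then edges_supported_in n (cs 0)
      else if i = k - 1 then edges_supported_in n (cs (k - 2))
      else edges_through n (cs (i - 1)) (cs i))"

definition pendant_templates :: "nat \<Rightarrow> nat \<Rightarrow> ((nat \<Rightarrow> nat) \<times> (nat \<Rightarrow> complex set)) set" where
  "pendant_templates n k = {(cs, es). cs \<in> inj_seqs n (k - 1) \<and>
     es \<in> PiE {..<k} (pendant_slot n k cs) \<and> inj_on es {..<k}}"

definition template_edges :: "nat \<times> (nat \<Rightarrow> nat) \<times> (nat \<Rightarrow> complex set) \<Rightarrow> complex set set" where
  "template_edges t = (case t of (k, cs, es) \<Rightarrow> es ` {..<k})"

lemma power_mult_3_square_eq: "m ^ k * (3 * m ^ 2) ^ k = (3 * m ^ 3 :: nat) ^ k"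
proof -
  have "m * (3 * m ^ 2) = 3 * m ^ 3" by (simp add: power2_eq_square power3_eq_cube)
  then show ?thesis by (metis power_mult_distrib)
qed

lemma card_cycle_templates_le:
  assumes k: "2 \<le> k"
  shows "finite (cycle_templates n k) \<and> card (cycle_templates n k) \<le> (3 * (n + 1) ^ 3) ^ k"
proof -
  have "finite (cycle_templates n k) \<and> card (cycle_templates n k) \<le> card (inj_seqs n k) * (3 * (n + 1) ^ 2) ^ k"
  proof (rule card_Sigma_PiE_le[OF finite_inj_seqs])
    show "finite (edges_through n (cs (cyc_prev k i)) (cs i))" for cs i
      by (rule finite_edges_through)
    show "card (edges_through n (cs (cyc_prev k i)) (cs i)) \<le> 3 * (n + 1) ^ 2"
      if cs: "cs \<in> inj_seqs n k" and i: "i < k" for cs i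
    proof -
      have "inj_on cs {..<k}" using cs unfolding inj_seqs_def by simp
      then have "cs (cyc_prev k i) \<noteq> cs i"
        using cyc_prev_less[OF k i] i inj_onD by fastforce
      then show ?thesis using card_edges_through_le[of "cs (cyc_prev k i)" "cs i" n] by linarith
    qed
    show "cycle_templates n k \<subseteq> Sigma (inj_seqs n k) (\<lambda>cs. PiE {..<k} (\<lambda>i. edges_through n (cs (cyc_prev k i)) (cs i)))"
      unfolding cycle_templates_def by auto
  qed
  moreover have "card (inj_seqs n k) \<le> (n + 1) ^ k"
    using card_inj_seqs_le[of n k] power_mono[of n "n + 1" k] by simp
  ultimately show ?thesis
    using mult_le_mono1[of "card (inj_seqs n k)" "(n + 1) ^ k" "(3 * (n + 1) ^ 2) ^ k"]
    unfolding power_mult_3_square_eq by linarith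
qed

lemma card_pendant_templates_le:
  assumes k: "2 \<le> k"
  shows "finite (pendant_templates n k) \<and> card (pendant_templates n k) \<le> (3 * (n + 1) ^ 3) ^ k"
proof -
  have "finite (pendant_templates n k) \<and>
      card (pendant_templates n k) \<le> card (inj_seqs n (k - 1)) * (3 * (n + 1) ^ 2) ^ k"
  proof (rule card_Sigma_PiE_le[OF finite_inj_seqs])
    show "finite (pendant_slot n k cs i)" for cs i
      unfolding pendant_slot_def by (simp add: finite_edges_through finite_edges_supported_in)
    show "card (pendant_slot n k cs i) \<le> 3 * (n + 1) ^ 2"
      if cs: "cs \<in> inj_seqs n (k - 1)" and i: "i < k" for cs i
    proof (cases "i = 0 \<or> i = k - 1")
      case True
      then show ?thesis unfolding pendant_slot_def using card_edges_supported_in_le by auto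
    next
      case False
      have "inj_on cs {..<k - 1}" using cs unfolding inj_seqs_def by simp
      moreover have "i - 1 < k - 1" "i < k - 1" "i - 1 \<noteq> i" using False i by auto
      ultimately have "cs (i - 1) \<noteq> cs i" using inj_onD[of cs "{..<k - 1}" "i - 1" i] by auto
      then show ?thesis
        unfolding pendant_slot_def using False card_edges_through_le[of "cs (i - 1)" "cs i" n] by simp
    qed
    show "pendant_templates n k \<subseteq> Sigma (inj_seqs n (k - 1)) (\<lambda>cs. PiE {..<k} (pendant_slot n k cs))"
      unfolding pendant_templates_def by auto
  qed
  moreover have "card (inj_seqs n (k - 1)) \<le> (n + 1) ^ k"
    using card_inj_seqs_le[of n "k - 1"] power_mono[of n "n + 1" "k - 1"]
      power_increasing[of "k - 1" k "n + 1"] by simp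
  ultimately show ?thesis
    using mult_le_mono1[of "card (inj_seqs n (k - 1))" "(n + 1) ^ k" "(3 * (n + 1) ^ 2) ^ k"]
    unfolding power_mult_3_square_eq by linarith
qed

definition cherries :: "nat \<Rightarrow> (complex \<times> complex \<times> complex) set" where
  "cherries n = {(y, y1, y2). y \<in> C0 n \<and> y1 \<in> C0 n \<and> y2 \<in> C0 n \<and> y \<noteq> y1 \<and> y \<noteq> y2 \<and> y1 \<noteq> y2}"

definition cherry_edges :: "complex \<times> complex \<times> complex \<Rightarrow> complex set set" where
  "cherry_edges t = (case t of (y, y1, y2) \<Rightarrow> {{y, y1}, {y, y2}})"

lemma cherry_edges_subset: "t \<in> cherries n \<Longrightarrow> cherry_edges t \<subseteq> possible_edges n"
  unfolding cherries_def cherry_edges_def possible_edges_def by auto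

lemma card_cherry_edges: "t \<in> cherries n \<Longrightarrow> card (cherry_edges t) = 2"
  unfolding cherries_def cherry_edges_def by (auto simp: doubleton_eq_iff)

lemma card_cherries_le: "finite (cherries n) \<and> card (cherries n) \<le> (n + 1) ^ 6"
proof -
  have sub: "cherries n \<subseteq> C0 n \<times> C0 n \<times> C0 n" unfolding cherries_def by auto
  have fin: "finite (C0 n \<times> C0 n \<times> C0 n)" using finite_C0 by simp
  have "card (cherries n) \<le> card (C0 n) ^ 3"
    using card_mono[OF fin sub] by (simp add: card_cartesian_product power3_eq_cube)
  also have "\<dots> \<le> ((n + 1) ^ 2) ^ 3" using card_C0_le by (rule power_mono) simp
  finally show ?thesis using finite_subset[OF sub fin] by (simp flip: power_mult)
qed

lemma cherry_if_not_matching: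
  assumes E: "E \<subseteq> possible_edges n" and "\<not> pairwise disjnt E"
  shows "\<exists>t\<in>cherries n. cherry_edges t \<subseteq> E"
proof -
  obtain e f y where ef: "e \<in> E" "f \<in> E" "e \<noteq> f" "y \<in> e" "y \<in> f"
    using assms(2) unfolding pairwise_def disjnt_def by blast
  obtain y1 where y1: "e = {y, y1}" "y \<in> C0 n" "y1 \<in> C0 n" "y \<noteq> y1"
    using E ef(1,4) possible_edges_memE by blast
  obtain y2 where y2: "f = {y, y2}" "y2 \<in> C0 n" "y \<noteq> y2"
    using E ef(2,5) possible_edges_memE by blast
  have "(y, y1, y2) \<in> cherries n" using y1 y2 ef(3) unfolding cherries_def by auto
  moreover have "cherry_edges (y, y1, y2) \<subseteq> E" unfolding cherry_edges_def using y1(1) y2(1) ef by simp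
  ultimately show ?thesis by blast
qed

lemma restrict_in_inj_seqs:
  assumes "inj_on cs {..<m}" "\<And>i. i < m \<Longrightarrow> cs i \<in> edge_support (es i)"
    and "\<And>i. i < m \<Longrightarrow> es i \<in> possible_edges n"
  shows "restrict cs {..<m} \<in> inj_seqs n m"
proof -
  have "cs i < n" if "i < m" for i
    using assms(2,3)[OF that] edge_support_subset by blast
  then show ?thesis using assms(1) unfolding inj_seqs_def by (auto simp: restrict_PiE_iff inj_on_def)
qed

lemma ex_template_subset:
  assumes "(cs, restrict es {..<k}) \<in> T k" "2 \<le> k"
    and "inj_on es {..<k}" "es ` {..<k} \<subseteq> E" "E \<subseteq> possible_edges n"
  shows "\<exists>t\<in>Sigma {2..card (possible_edges n)} T. template_edges t \<subseteq> E"
proof -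
  have "k \<le> card (possible_edges n)"
    using card_mono[OF finite_possible_edges, of "es ` {..<k}"] card_image[OF assms(3)] assms(4,5)
    by simp
  then show ?thesis
    using assms(1,2,4) by (intro bexI[of _ "(k, cs, restrict es {..<k})"]) (auto simp: template_edges_def)
qed

lemma hcycle_template:
  assumes E: "E \<subseteq> possible_edges n" and C: "hcycle edge_support E k es cs"
  shows "\<exists>t\<in>Sigma {2..card (possible_edges n)} (cycle_templates n). template_edges t \<subseteq> E"
proof (rule ex_template_subset[OF _ _ _ _ E])
  have k: "2 \<le> k" and "inj_on es {..<k}" and img: "es ` {..<k} \<subseteq> E" and "inj_on cs {..<k}"
    and cc: "\<And>i. i < k \<Longrightarrow> cs i \<in> edge_support (es i) \<and> cs (cyc_prev k i) \<in> edge_support (es i)"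
    using C unfolding hcycle_def by auto
  have esP: "\<And>i. i < k \<Longrightarrow> es i \<in> possible_edges n" using img E by auto
  have "restrict cs {..<k} \<in> inj_seqs n k"
    using \<open>inj_on cs {..<k}\<close> cc esP by (intro restrict_in_inj_seqs) auto
  moreover have "es i \<in> edges_through n (cs (cyc_prev k i)) (cs i)" if "i < k" for i
    using cc esP that unfolding edges_through_def by simp
  then have "restrict es {..<k} \<in> PiE {..<k} (\<lambda>i. edges_through n (restrict cs {..<k} (cyc_prev k i)) (restrict cs {..<k} i))"
    using cyc_prev_less[OF k] by (auto simp: restrict_PiE_iff)
  ultimately show "(restrict cs {..<k}, restrict es {..<k}) \<in> cycle_templates n k"
    using \<open>inj_on es {..<k}\<close> unfolding cycle_templates_def by (simp add: inj_on_def)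
qed (use C in \<open>auto simp: hcycle_def\<close>)

lemma pendant_hpath_template:
  assumes E: "E \<subseteq> possible_edges n" and C: "pendant_hpath edge_support E k es cs"
  shows "\<exists>t\<in>Sigma {2..card (possible_edges n)} (pendant_templates n). template_edges t \<subseteq> E"
proof (rule ex_template_subset[OF _ _ _ _ E])
  have k: "2 \<le> k" and "inj_on es {..<k}" and img: "es ` {..<k} \<subseteq> E" and "inj_on cs {..<k - 1}"
    and pc: "\<And>i. Suc i < k \<Longrightarrow> cs i \<in> edge_support (es i) \<and> cs i \<in> edge_support (es (Suc i))"
    and first: "edge_support (es 0) \<subseteq> {cs 0}" and last: "edge_support (es (k - 1)) \<subseteq> {cs (k - 2)}"
    using C unfolding pendant_hpath_def hpath_def by auto
  have esP: "\<And>i. i < k \<Longrightarrow> es i \<in> possible_edges n" using img E by auto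
  let ?cs = "restrict cs {..<k - 1}"
  have "?cs \<in> inj_seqs n (k - 1)"
    using \<open>inj_on cs {..<k - 1}\<close> pc esP by (intro restrict_in_inj_seqs[where es = es]) auto
  moreover have "es i \<in> pendant_slot n k ?cs i" if i: "i < k" for i
  proof -
    consider "i = 0" | "i = k - 1" | "0 < i" "i < k - 1" using i by linarith
    then show ?thesis
    proof cases
      case 1
      then show ?thesis
        using k first esP unfolding pendant_slot_def edges_supported_in_def by simp
    next
      case 2
      moreover have "k - 2 < k - 1" using k by simp
      ultimately show ?thesis
        using k last esP unfolding pendant_slot_def edges_supported_in_def by simp
    next
      case 3
      moreover have "i - 1 < k - 1" using 3 by simp
      ultimately show ?thesis
        using pc[of "i - 1"] pc[of i] esP[OF i] unfolding pendant_slot_def edges_through_def by simp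
    qed
  qed
  ultimately show "(?cs, restrict es {..<k}) \<in> pendant_templates n k"
    using \<open>inj_on es {..<k}\<close> unfolding pendant_templates_def by (simp add: inj_on_def restrict_PiE_iff)
qed (use C in \<open>auto simp: pendant_hpath_def hpath_def\<close>)

lemma cycle_templates_edges:
  assumes "(cs, es) \<in> cycle_templates n k"
  shows "inj_on es {..<k} \<and> es ` {..<k} \<subseteq> possible_edges n"
  using assms unfolding cycle_templates_def edges_through_def by (auto simp: PiE_iff)

lemma pendant_templates_edges:
  assumes "(cs, es) \<in> pendant_templates n k"
  shows "inj_on es {..<k} \<and> es ` {..<k} \<subseteq> possible_edges n"
proof -
  have "es i \<in> pendant_slot n k cs i" if "i < k" for i
    using assms that unfolding pendant_templates_def by (auto simp: PiE_iff)
  then show ?thesis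
    using assms unfolding pendant_templates_def pendant_slot_def edges_through_def edges_supported_in_def
    by (auto split: if_splits)
qed

lemma deficiency_zero_unless_bad:
  assumes E: "E \<subseteq> possible_edges n"
    and "\<not> (\<exists>t\<in>cherries n. cherry_edges t \<subseteq> E)"
    and "\<not> (\<exists>t\<in>Sigma {2..card (possible_edges n)} (cycle_templates n). template_edges t \<subseteq> E)"
    and "\<not> (\<exists>t\<in>Sigma {2..card (possible_edges n)} (pendant_templates n). template_edges t \<subseteq> E)"
  shows "deficiency (network_of E) = 0"
proof (rule deficiency_network_of_sparse[OF E])
  show "pairwise disjnt E" using cherry_if_not_matching[OF E] assms(2) by blast
  show "\<not> hcycle edge_support E k es cs" for k es cs using hcycle_template[OF E] assms(3) by blast
  show "\<not> pendant_hpath edge_support E k es cs" for k es cs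
    using pendant_hpath_template[OF E] assms(4) by blast
qed

section \<open>Probability of a bad configuration\<close>

lemma sum_geometric_from_2_le:
  fixes x :: real
  assumes "0 \<le> x" "x \<le> 1/2"
  shows "(\<Sum>k\<in>{2..M}. x ^ k) \<le> 2 * x\<^sup>2"
proof (cases "2 \<le> M")
  case True
  let ?S = "\<Sum>k\<in>{2..M}. x ^ k"
  have "(1 - x) * ?S = x\<^sup>2 - x ^ Suc M" by (rule sum_gp_multiplied[OF True])
  also have "\<dots> \<le> x\<^sup>2" using assms by simp
  finally have le: "(1 - x) * ?S \<le> x\<^sup>2" .
  have "0 \<le> ?S" using assms by (intro sum_nonneg) simp
  moreover have "1 \<le> 2 * (1 - x)" using assms by simp
  ultimately have "?S \<le> 2 * (1 - x) * ?S" using mult_right_mono[of 1 "2 * (1 - x)" ?S] by simp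
  also have "\<dots> = 2 * ((1 - x) * ?S)" by simp
  also have "\<dots> \<le> 2 * x\<^sup>2" using le by simp
  finally show ?thesis .
qed simp

lemma ER_prob_cherry_le:
  fixes p :: real
  assumes p: "0 \<le> p" "p \<le> 1"
  shows "ER_prob n p (\<lambda>E. \<exists>t\<in>cherries n. cherry_edges t \<subseteq> E) \<le> ((real n + 1) ^ 3 * p)\<^sup>2"
proof -
  have "ER_prob n p (\<lambda>E. \<exists>t\<in>cherries n. cherry_edges t \<subseteq> E) \<le> (\<Sum>t\<in>cherries n. p ^ card (cherry_edges t))"
    using card_cherries_le cherry_edges_subset by (intro ER_prob_union_bound[OF p]) auto
  also have "\<dots> = real (card (cherries n)) * p\<^sup>2" by (simp add: card_cherry_edges)
  also have "\<dots> \<le> real ((n + 1) ^ 6) * p\<^sup>2"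
  proof (rule mult_right_mono)
    show "real (card (cherries n)) \<le> real ((n + 1) ^ 6)"
      using card_cherries_le[of n] by (simp only: of_nat_le_iff)
  qed simp
  also have "\<dots> = ((real n + 1) ^ 3 * p)\<^sup>2"
    by (simp add: power_mult_distrib add.commute flip: power_mult)
  finally show ?thesis .
qed

lemma ER_prob_template_le:
  fixes p :: real
  assumes p: "0 \<le> p" "p \<le> 1" and small: "3 * (real n + 1) ^ 3 * p \<le> 1/2"
    and card: "\<And>k. 2 \<le> k \<Longrightarrow> finite (T k) \<and> card (T k) \<le> (3 * (n + 1) ^ 3) ^ k"
    and edges: "\<And>k cs es. (cs, es) \<in> T k \<Longrightarrow> inj_on es {..<k} \<and> es ` {..<k} \<subseteq> possible_edges n"
  shows "ER_prob n p (\<lambda>E. \<exists>t\<in>Sigma {2..M} T. template_edges t \<subseteq> E)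
    \<le> 2 * (3 * (real n + 1) ^ 3 * p)\<^sup>2"
proof -
  let ?x = "3 * (real n + 1) ^ 3 * p"
  have "ER_prob n p (\<lambda>E. \<exists>t\<in>Sigma {2..M} T. template_edges t \<subseteq> E)
      \<le> (\<Sum>t\<in>Sigma {2..M} T. p ^ card (template_edges t))"
  proof (rule ER_prob_union_bound[OF p])
    show "finite (Sigma {2..M} T)" using card by (intro finite_SigmaI) auto
    show "template_edges t \<subseteq> possible_edges n" if t: "t \<in> Sigma {2..M} T" for t
    proof -
      obtain k cs es where "t = (k, cs, es)" "(cs, es) \<in> T k" using t by auto
      then show ?thesis using edges[of cs es k] unfolding template_edges_def by auto
    qed
  qed
  also have "\<dots> = (\<Sum>k\<in>{2..M}. \<Sum>b\<in>T k. p ^ card (template_edges (k, b)))"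
    using card by (subst sum.Sigma) auto
  also have "\<dots> = (\<Sum>k\<in>{2..M}. real (card (T k)) * p ^ k)"
  proof (rule sum.cong[OF refl])
    fix k
    have "card (template_edges (k, b)) = k" if b: "b \<in> T k" for b
    proof -
      obtain cs es where "b = (cs, es)" by (cases b)
      then show ?thesis
        using edges[of cs es k] b card_image[of es "{..<k}"] unfolding template_edges_def by simp
    qed
    then show "(\<Sum>b\<in>T k. p ^ card (template_edges (k, b))) = real (card (T k)) * p ^ k"
      by simp
  qed
  also have "\<dots> \<le> (\<Sum>k\<in>{2..M}. ?x ^ k)"
  proof (rule sum_mono)
    fix k assume "k \<in> {2..M}"
    then have "card (T k) \<le> (3 * (n + 1) ^ 3) ^ k" using card[of k] by simp
    then have "real (card (T k)) \<le> real ((3 * (n + 1) ^ 3) ^ k)" by (simp only: of_nat_le_iff)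
    then have "real (card (T k)) * p ^ k \<le> (3 * (real n + 1) ^ 3) ^ k * p ^ k"
      using p by (intro mult_right_mono) (simp_all add: add.commute)
    then show "real (card (T k)) * p ^ k \<le> ?x ^ k"
      by (simp only: power_mult_distrib)
  qed
  also have "\<dots> \<le> 2 * ?x\<^sup>2" using small p by (intro sum_geometric_from_2_le) auto
  finally show ?thesis .
qed

lemma ER_prob_deficiency_zero_ge:
  fixes p :: real
  assumes p: "0 \<le> p" "p \<le> 1" and small: "3 * (real n + 1) ^ 3 * p \<le> 1/2"
  shows "1 - 5 * (3 * (real n + 1) ^ 3 * p)\<^sup>2 \<le> ER_prob n p (\<lambda>E. deficiency (network_of E) = 0)"
proof -
  let ?x = "3 * (real n + 1) ^ 3 * p" and ?M = "card (possible_edges n)"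
  define cherry where "cherry E \<longleftrightarrow> (\<exists>t\<in>cherries n. cherry_edges t \<subseteq> E)" for E
  define cycle where "cycle E \<longleftrightarrow> (\<exists>t\<in>Sigma {2..?M} (cycle_templates n). template_edges t \<subseteq> E)" for E
  define pendant where "pendant E \<longleftrightarrow> (\<exists>t\<in>Sigma {2..?M} (pendant_templates n). template_edges t \<subseteq> E)" for E
  have "deficiency (network_of E) = 0"
    if "E \<subseteq> possible_edges n" "\<not> (cherry E \<or> cycle E \<or> pendant E)" for E
    using deficiency_zero_unless_bad[OF that(1)] that(2) unfolding cherry_def cycle_def pendant_def
    by blast
  then have "ER_prob n p (\<lambda>E. \<not> (cherry E \<or> cycle E \<or> pendant E))
      \<le> ER_prob n p (\<lambda>E. deficiency (network_of E) = 0)"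
    by (intro ER_prob_mono[OF p])
  moreover have "ER_prob n p (\<lambda>E. cherry E \<or> cycle E \<or> pendant E)
      \<le> ER_prob n p cherry + (ER_prob n p cycle + ER_prob n p pendant)"
    using ER_prob_disj_le[OF p, of n cherry "\<lambda>E. cycle E \<or> pendant E"]
      ER_prob_disj_le[OF p, of n cycle pendant] by linarith
  moreover have "ER_prob n p cherry \<le> ?x\<^sup>2"
  proof -
    have "ER_prob n p cherry \<le> ((real n + 1) ^ 3 * p)\<^sup>2"
      unfolding cherry_def by (rule ER_prob_cherry_le[OF p])
    also have "\<dots> \<le> ?x\<^sup>2" using p by (simp add: power_mult_distrib)
    finally show ?thesis .
  qed
  moreover have "ER_prob n p cycle \<le> 2 * ?x\<^sup>2"
    unfolding cycle_def using card_cycle_templates_le cycle_templates_edges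
    by (intro ER_prob_template_le[OF p small]) auto
  moreover have "ER_prob n p pendant \<le> 2 * ?x\<^sup>2"
    unfolding pendant_def using card_pendant_templates_le pendant_templates_edges
    by (intro ER_prob_template_le[OF p small]) auto
  ultimately show ?thesis unfolding ER_prob_not by linarith
qed

lemma tendsto_Suc_cube_mult_zero:
  fixes p :: "nat \<Rightarrow> real"
  assumes "\<And>n. 0 \<le> p n" "(\<lambda>n. real n ^ 3 * p n) \<longlonglongrightarrow> 0"
  shows "(\<lambda>n. (real n + 1) ^ 3 * p n) \<longlonglongrightarrow> 0"
proof (rule tendsto_sandwich[of "\<lambda>_. 0" _ sequentially "\<lambda>n. 8 * (real n ^ 3 * p n)"])
  show "\<forall>\<^sub>F n in sequentially. 0 \<le> (real n + 1) ^ 3 * p n" using assms(1) by simp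
  show "\<forall>\<^sub>F n in sequentially. (real n + 1) ^ 3 * p n \<le> 8 * (real n ^ 3 * p n)"
    using eventually_ge_at_top[of 1]
  proof eventually_elim
    case (elim n)
    have "(real n + 1) ^ 3 \<le> (2 * real n) ^ 3" using elim by (intro power_mono) auto
    then have "(real n + 1) ^ 3 * p n \<le> (8 * real n ^ 3) * p n"
      using assms(1)[of n] by (intro mult_right_mono) (simp_all add: power_mult_distrib)
    then show ?case by (simp add: algebra_simps)
  qed
  show "(\<lambda>n. 8 * (real n ^ 3 * p n)) \<longlonglongrightarrow> 0" using tendsto_mult_right_zero[OF assms(2)] by simp
qed simp

theorem mainTheorem2:
  fixes p :: "nat \<Rightarrow> real"
  assumes "\<And>n. 0 \<le> p n \<and> p n \<le> 1"
    and "(\<lambda>n. real n ^ 3 * p n) \<longlonglongrightarrow> 0"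
  shows "(\<lambda>n. ER_prob n (p n) (\<lambda>E. deficiency (network_of E) = 0)) \<longlonglongrightarrow> 1"
proof -
  have p: "0 \<le> p n" "p n \<le> 1" for n using assms(1) by auto
  define x where "x n = 3 * (real n + 1) ^ 3 * p n" for n
  have "x \<longlonglongrightarrow> 0"
    using tendsto_mult_right_zero[OF tendsto_Suc_cube_mult_zero[OF p(1) assms(2)], of 3]
    unfolding x_def by (simp add: mult.assoc)
  then have "(\<lambda>n. 1 - 5 * (x n)\<^sup>2) \<longlonglongrightarrow> 1 - 5 * 0\<^sup>2" by (intro tendsto_intros)
  then have lower: "(\<lambda>n. 1 - 5 * (x n)\<^sup>2) \<longlonglongrightarrow> 1" by simp
  have "\<forall>\<^sub>F n in sequentially. x n < 1/2"
    using order_tendstoD(2)[OF \<open>x \<longlonglongrightarrow> 0\<close>, of "1/2"] by simp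
  then have "\<forall>\<^sub>F n in sequentially. 1 - 5 * (x n)\<^sup>2 \<le> ER_prob n (p n) (\<lambda>E. deficiency (network_of E) = 0)"
    by eventually_elim (use ER_prob_deficiency_zero_ge p in \<open>simp add: x_def\<close>)
  moreover have "\<forall>\<^sub>F n in sequentially. ER_prob n (p n) (\<lambda>E. deficiency (network_of E) = 0) \<le> 1"
    using p by (simp add: ER_prob_le_1)
  ultimately show ?thesis by (rule tendsto_sandwich[OF _ _ lower tendsto_const])
qed

end
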